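(* Let $X$ be a rearrangement invariant space on $[0,1]$ which is an interpolation space between $L^1([0,1])$ and $L^\infty([0,1])$, and let $(w_{n_k})$ be a $q$-lacunary sequence of Walsh functions with $q>1$. Then $(w_{n_k})$ is a basic sequence in $X$, i.e. there is a constant $K>0$ such that $\|\sum_{k=1}^Ma_kw_{n_k}\|_X\le K\|\sum_{k=1}^Na_kw_{n_k}\|_X$ for all $M<N$ and all real $a_1,\dots,a_N$.
   Context: $m$ is Lebesgue measure. A Banach function space $X$ over $[0,1]$ is a linear space of measurable functions with a complete norm such that $g\in X$, $|f|\le|g|$ a.e. imply $f\in X$, $\|f\|_X\le\|g\|_X$; it is rearrangement invariant (r.i.) if equimeasurable functions have equal norms (and membership). $X$ is an interpolation space between $L^1$ and $L^\infty$ if $L^\infty\subset X\subset L^1$ continuously and every linear operator bounded on $L^1$ and on $L^\infty$ is bounded on $X$. Rademacher functions $r_k(t)=\mathrm{sign}\sin(2^k\pi t)$; Walsh functions (Paley numbering) $w_0=1$, $w_k=r_1^{a_1}\cdots r_n^{a_n}$ for $k=\sum_{i=1}^na_i2^{i-1}$, $a_i\in\{0,1\}$. $(w_{n_k})$ is $q$-lacunary if $n_{k+1}/n_k\ge q$ for all $k$. *)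

theory Defs
  imports "HOL-Analysis.Analysis"
begin

abbreviation I01 :: "real measure" where
  "I01 \<equiv> lebesgue_on {0..1}"

text \<open>A function space is given by a set X of functions and a norm nrm on it.
  Banach function space over [0,1] (norm is on functions, a.e.-equal functions get equal
  norm by the lattice property).\<close>
definition banach_function_space :: "(real \<Rightarrow> real) set \<Rightarrow> ((real \<Rightarrow> real) \<Rightarrow> real) \<Rightarrow> bool" where
  "banach_function_space X nrm \<longleftrightarrow>
     X \<subseteq> borel_measurable I01 \<and>
     (\<lambda>_. 0) \<in> X \<and>
     (\<forall>f\<in>X. \<forall>g\<in>X. (\<lambda>x. f x + g x) \<in> X) \<and>
     (\<forall>c. \<forall>f\<in>X. (\<lambda>x. c * f x) \<in> X) \<and>
     (\<forall>f\<in>X. 0 \<le> nrm f) \<and>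
     (\<forall>f\<in>X. nrm f = 0 \<longleftrightarrow> (AE x in I01. f x = 0)) \<and>
     (\<forall>f\<in>X. \<forall>g\<in>X. nrm (\<lambda>x. f x + g x) \<le> nrm f + nrm g) \<and>
     (\<forall>c. \<forall>f\<in>X. nrm (\<lambda>x. c * f x) = \<bar>c\<bar> * nrm f) \<and>
     (\<forall>f g. g \<in> X \<and> f \<in> borel_measurable I01 \<and> (AE x in I01. \<bar>f x\<bar> \<le> \<bar>g x\<bar>)
            \<longrightarrow> f \<in> X \<and> nrm f \<le> nrm g) \<and>
     (\<forall>u :: nat \<Rightarrow> real \<Rightarrow> real. (\<forall>n. u n \<in> X) \<and>
          (\<forall>e>0. \<exists>K. \<forall>m\<ge>K. \<forall>n\<ge>K. nrm (\<lambda>x. u m x - u n x) < e)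
        \<longrightarrow> (\<exists>f\<in>X. (\<lambda>n. nrm (\<lambda>x. u n x - f x)) \<longlonglongrightarrow> 0))"

definition equimeasurable :: "(real \<Rightarrow> real) \<Rightarrow> (real \<Rightarrow> real) \<Rightarrow> bool" where
  "equimeasurable f g \<longleftrightarrow>
     (\<forall>t. measure I01 {x \<in> {0..1}. \<bar>f x\<bar> > t} = measure I01 {x \<in> {0..1}. \<bar>g x\<bar> > t})"

definition rearrangement_invariant :: "(real \<Rightarrow> real) set \<Rightarrow> ((real \<Rightarrow> real) \<Rightarrow> real) \<Rightarrow> bool" where
  "rearrangement_invariant X nrm \<longleftrightarrow>
     banach_function_space X nrm \<and>
     (\<forall>f g. f \<in> borel_measurable I01 \<and> g \<in> borel_measurable I01 \<and> equimeasurable f g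
        \<longrightarrow> (f \<in> X \<longleftrightarrow> g \<in> X) \<and> (f \<in> X \<longrightarrow> nrm f = nrm g))"

definition ess_bdd :: "(real \<Rightarrow> real) \<Rightarrow> real \<Rightarrow> bool" where
  "ess_bdd f c \<longleftrightarrow> (AE x in I01. \<bar>f x\<bar> \<le> c)"

definition L1norm :: "(real \<Rightarrow> real) \<Rightarrow> real" where
  "L1norm f = (\<integral>x. \<bar>f x\<bar> \<partial>I01)"

text \<open>A linear operator on L1 = L1 + L-infinity that is bounded on L1 and on L-infinity.\<close>
definition bounded_L1_Linf_operator :: "((real \<Rightarrow> real) \<Rightarrow> (real \<Rightarrow> real)) \<Rightarrow> bool" where
  "bounded_L1_Linf_operator T \<longleftrightarrow>
     (\<forall>f. integrable I01 f \<longrightarrow> integrable I01 (T f)) \<and>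
     (\<forall>a b f g. integrable I01 f \<and> integrable I01 g \<longrightarrow>
        (AE x in I01. T (\<lambda>y. a * f y + b * g y) x = a * T f x + b * T g x)) \<and>
     (\<exists>C. \<forall>f. integrable I01 f \<longrightarrow> L1norm (T f) \<le> C * L1norm f) \<and>
     (\<exists>C. \<forall>f c. f \<in> borel_measurable I01 \<and> ess_bdd f c \<longrightarrow> ess_bdd (T f) (C * c))"

definition interpolation_space_L1_Linf :: "(real \<Rightarrow> real) set \<Rightarrow> ((real \<Rightarrow> real) \<Rightarrow> real) \<Rightarrow> bool" where
  "interpolation_space_L1_Linf X nrm \<longleftrightarrow>
     (\<exists>C. \<forall>f c. f \<in> borel_measurable I01 \<and> ess_bdd f c \<longrightarrow> f \<in> X \<and> nrm f \<le> C * c) \<and>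
     (\<exists>C. \<forall>f\<in>X. integrable I01 f \<and> L1norm f \<le> C * nrm f) \<and>
     (\<forall>T. bounded_L1_Linf_operator T \<longrightarrow>
        (\<exists>C. \<forall>f\<in>X. T f \<in> X \<and> nrm (T f) \<le> C * nrm f))"

definition rademacher :: "nat \<Rightarrow> real \<Rightarrow> real" where
  "rademacher k t = sgn (sin (2 ^ k * pi * t))"

definition walsh :: "nat \<Rightarrow> real \<Rightarrow> real" where
  "walsh n t = (\<Prod>i<n. if bit n i then rademacher (Suc i) t else 1)"

definition lacunary :: "real \<Rightarrow> (nat \<Rightarrow> nat) \<Rightarrow> bool" where
  "lacunary q n \<longleftrightarrow> (\<forall>k\<ge>1. real (n (Suc k)) / real (n k) \<ge> q)"

end

theory Submission
  imports Defs "HOL-Library.Discrete_Functions"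
begin

text \<open>Off the dyadic rationals, a point \<open>t \<in> [0,1]\<close> is determined up to level \<open>R\<close> by the set
  \<open>S \<subseteq> {..<R}\<close> of positions of its binary digits equal to 1; then \<open>w\<^sub>n(t) = (-1)^|bits(n) \<inter> S|\<close>
  is a character of the group \<open>(Pow {..<R}, sym_diff)\<close>, and Lebesgue measure becomes counting
  measure divided by \<open>2^R\<close>. Translating \<open>S\<close> by \<open>J\<close> preserves distributions and multiplies the
  coefficient of \<open>w\<^sub>n\<close> by \<open>(-1)^|bits(n) \<inter> J|\<close>, so in an r.i. space any weighted average of the
  translates of \<open>f = \<Sum> a\<^sub>k w\<^bsub>n\<^sub>k\<^esub>\<close> has norm at most \<open>\<parallel>f\<parallel>\<close> times the sum of the absolute weights. The uniform
  average over \<open>J \<subseteq> {m..<R}\<close> is the dyadic partial sum over \<open>n\<^sub>k < 2^m\<close>, and averaging against the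
  character of \<open>n\<^sub>k\<close> isolates the term \<open>a\<^sub>k w\<^bsub>n\<^sub>k\<^esub>\<close>; both have norm at most \<open>\<parallel>f\<parallel>\<close>.
  If \<open>2 \<le> q^L\<close> and \<open>n\<^sub>M < 2^m \<le> 2 n\<^sub>M\<close>, lacunarity leaves fewer than \<open>L\<close> indices \<open>k > M\<close> with
  \<open>n\<^sub>k < 2^m\<close>, so the partial sum up to \<open>M\<close> has norm at most \<open>L \<parallel>f\<parallel>\<close>. The interpolation
  hypothesis only serves to put the bounded function \<open>f\<close> into \<open>X\<close>.\<close>

section \<open>Characters of the dyadic group\<close>

definition bits_of :: "nat \<Rightarrow> nat set" where
  "bits_of n = {i. bit n i}"

definition dyadic_char :: "nat set \<Rightarrow> nat set \<Rightarrow> real" where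
  "dyadic_char B J = (-1) ^ card (B \<inter> J)"

lemma minus_one_power_card_sym_diff:
  assumes "finite A" "finite B"
  shows "(-1::real) ^ card (sym_diff A B) = (-1) ^ card A * (-1) ^ card B"
proof -
  have "card (sym_diff A B) = card (A - B) + card (B - A)"
    using assms by (intro card_Un_disjoint) auto
  moreover have "card A = card (A \<inter> B) + card (A - B)" "card B = card (A \<inter> B) + card (B - A)"
    using card_Int_Diff[OF assms(1), of B] card_Int_Diff[OF assms(2), of A] by (simp_all add: Int_commute)
  ultimately have "card A + card B = card (sym_diff A B) + 2 * card (A \<inter> B)"
    by simp
  then have "(-1::real) ^ card A * (-1) ^ card B = (-1) ^ card (sym_diff A B) * ((-1) ^ 2) ^ card (A \<inter> B)"
    by (metis power_add power_mult)
  then show ?thesis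
    by simp
qed

lemma dyadic_char_sym_diff:
  assumes "finite B"
  shows "dyadic_char B (sym_diff S J) = dyadic_char B S * dyadic_char B J"
proof -
  have "B \<inter> sym_diff S J = sym_diff (B \<inter> S) (B \<inter> J)" by blast
  then show ?thesis
    using minus_one_power_card_sym_diff[of "B \<inter> S" "B \<inter> J"] assms by (simp add: dyadic_char_def)
qed

lemma dyadic_char_sym_diff_left:
  assumes "finite J"
  shows "dyadic_char (sym_diff A B) J = dyadic_char A J * dyadic_char B J"
  using dyadic_char_sym_diff[OF assms, of A B] by (simp add: dyadic_char_def Int_commute)

lemma dyadic_char_insert:
  assumes "finite J" "x \<notin> J"
  shows "dyadic_char C (insert x J) = (if x \<in> C then -1 else 1) * dyadic_char C J"
  using assms by (simp add: dyadic_char_def Int_insert_right)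

lemma sum_dyadic_char_Pow:
  assumes "finite U"
  shows "(\<Sum>J\<in>Pow U. dyadic_char C J) = (if C \<inter> U = {} then 2 ^ card U else 0)"
  using assms
proof (induction U rule: finite_induct)
  case empty
  then show ?case by (simp add: dyadic_char_def)
next
  case (insert x F)
  have inj: "inj_on (insert x) (Pow F)"
    using insert.hyps by (meson PowD inj_on_def insert_ident subset_iff)
  have shift: "(\<Sum>J\<in>Pow F. dyadic_char C (insert x J))
                = (\<Sum>J\<in>Pow F. (if x \<in> C then -1 else 1) * dyadic_char C J)"
    by (rule sum.cong[OF refl], rule dyadic_char_insert)
      (use insert.hyps in \<open>auto intro: finite_subset\<close>)
  have "(\<Sum>J\<in>Pow (insert x F). dyadic_char C J)
        = (\<Sum>J\<in>Pow F. dyadic_char C J) + (\<Sum>J\<in>insert x ` Pow F. dyadic_char C J)"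
    unfolding Pow_insert using insert.hyps by (intro sum.union_disjoint) auto
  also have "\<dots> = (\<Sum>J\<in>Pow F. dyadic_char C J) + (\<Sum>J\<in>Pow F. dyadic_char C (insert x J))"
    using inj by (simp add: sum.reindex)
  also have "\<dots> = (1 + (if x \<in> C then -1 else 1)) * (\<Sum>J\<in>Pow F. dyadic_char C J)"
    unfolding shift by (simp add: algebra_simps sum_distrib_left)
  finally have sum_insert: "(\<Sum>J\<in>Pow (insert x F). dyadic_char C J)
                = (1 + (if x \<in> C then -1 else 1)) * (\<Sum>J\<in>Pow F. dyadic_char C J)" .
  show ?case
  proof (cases "x \<in> C")
    case True
    then show ?thesis
      unfolding sum_insert by auto
  next
    case False
    then have "C \<inter> insert x F = C \<inter> F"
      by blast
    then show ?thesis
      unfolding sum_insert insert.IH using False insert.hyps by simp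
  qed
qed

lemma dyadic_char_orthogonal:
  assumes "A \<subseteq> {..<R}" "B \<subseteq> {..<R}"
  shows "(\<Sum>J\<in>Pow {..<R}. dyadic_char A J * dyadic_char B J) = of_bool (A = B) * 2 ^ R"
proof -
  have "(\<Sum>J\<in>Pow {..<R}. dyadic_char A J * dyadic_char B J) = (\<Sum>J\<in>Pow {..<R}. dyadic_char (sym_diff A B) J)"
    by (intro sum.cong refl) (simp add: dyadic_char_sym_diff_left finite_subset)
  also have "\<dots> = of_bool (A = B) * 2 ^ R"
  proof -
    have "sym_diff A B \<inter> {..<R} = {} \<longleftrightarrow> A = B"
      using assms by blast
    then show ?thesis
      by (simp add: sum_dyadic_char_Pow)
  qed
  finally show ?thesis .
qed
lemma card_Pow_sym_diff_invariant:
  assumes "J \<subseteq> U"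
  shows "card {S\<in>Pow U. Q (sym_diff S J)} = card {S\<in>Pow U. Q S}"
proof (rule bij_betw_same_card)
  have involution: "sym_diff (sym_diff S J) J = S" for S :: "'a set"
    by blast
  have "(\<lambda>S. sym_diff S J) ` {S\<in>Pow U. Q (sym_diff S J)} \<subseteq> {S\<in>Pow U. Q S}"
    using assms by blast
  moreover have "(\<lambda>S. sym_diff S J) ` {S\<in>Pow U. Q S} \<subseteq> {S\<in>Pow U. Q (sym_diff S J)}"
    using assms by (auto simp: involution)
  ultimately show "bij_betw (\<lambda>S. sym_diff S J) {S\<in>Pow U. Q (sym_diff S J)} {S\<in>Pow U. Q S}"
    by (intro bij_betw_byWitness[where f' = "\<lambda>S. sym_diff S J"]) (simp_all add: involution)
qed

lemma bits_of_subset_lessThan_iff: "bits_of n \<subseteq> {..<m} \<longleftrightarrow> n < 2 ^ m"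
proof
  assume "bits_of n \<subseteq> {..<m}"
  then have "take_bit m n = n"
    by (intro bit_eqI) (auto simp: bit_take_bit_iff bits_of_def)
  then show "n < 2 ^ m"
    by (simp add: take_bit_nat_eq_self_iff)
next
  assume n: "n < 2 ^ m"
  have "\<not> bit n i" if "m \<le> i" for i
  proof -
    have "n < 2 ^ i"
      using n that by (meson order_less_le_trans one_le_numeral power_increasing)
    then show ?thesis by (simp add: bit_nat_def)
  qed
  then show "bits_of n \<subseteq> {..<m}"
    by (auto simp: bits_of_def not_less[symmetric])
qed

lemma finite_bits_of: "finite (bits_of n)"
  using bits_of_subset_lessThan_iff[of n n] less_exp finite_subset by blast

lemma bits_of_inject: "bits_of m = bits_of n \<longleftrightarrow> m = n"
  by (auto simp: bits_of_def set_eq_iff intro: bit_eqI)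

section \<open>Walsh functions and binary digits\<close>

definition dyadic_index :: "nat \<Rightarrow> real \<Rightarrow> nat" where
  "dyadic_index R t = nat \<lfloor>2 ^ R * t\<rfloor>"

text \<open>For \<open>0 \<le> t < 1\<close>, \<open>i \<in> digit_set R (dyadic_index R t)\<close> iff the \<open>(i+1)\<close>-st binary digit of \<open>t\<close>
  is 1: the bits of the index are read from the most significant end.\<close>
definition digit_set :: "nat \<Rightarrow> nat \<Rightarrow> nat set" where
  "digit_set R x = {i. i < R \<and> bit x (R - 1 - i)}"

lemma sgn_sin_pi_nat_plus:
  assumes "0 < \<theta>" "\<theta> < 1"
  shows "sgn (sin (pi * (real D + \<theta>))) = (-1) ^ D"
proof -
  have "sin (pi * (real D + \<theta>)) = (-1) ^ D * sin (pi * \<theta>)"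
    by (simp add: distrib_left sin_add sin_npi cos_npi mult.commute)
  moreover have "sin (pi * \<theta>) > 0"
    using assms by (intro sin_gt_zero) auto
  ultimately show ?thesis
    by (simp add: sgn_mult)
qed

lemma rademacher_Suc_eq_digit:
  assumes t: "0 \<le> t" "2 ^ R * t \<notin> \<int>" and i: "i < R"
  shows "rademacher (Suc i) t = (if i \<in> digit_set R (dyadic_index R t) then -1 else 1)"
proof -
  define x where "x = dyadic_index R t"
  define p where "p = R - 1 - i"
  define D where "D = x div 2 ^ p"
  define r where "r = x mod 2 ^ p"
  define \<theta> where "\<theta> = (real r + (2 ^ R * t - real x)) / 2 ^ p"
  have x: "real x = of_int \<lfloor>2 ^ R * t\<rfloor>"
    using t by (simp add: x_def dyadic_index_def)
  then have "real x \<noteq> 2 ^ R * t"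
    using t(2) by (metis Ints_of_int)
  with x have frac: "0 < 2 ^ R * t - real x" "2 ^ R * t - real x < 1"
    by linarith+
  have "r < 2 ^ p"
    by (simp add: r_def)
  then have r: "real r + 1 \<le> 2 ^ p"
    by (metis Suc_eq_plus1 Suc_leI of_nat_1 of_nat_add of_nat_le_iff of_nat_numeral of_nat_power)
  have \<theta>: "0 < \<theta>" "\<theta> < 1"
    unfolding \<theta>_def using frac r by (auto simp: divide_less_eq)
  have "x = D * 2 ^ p + r"
    by (simp add: D_def r_def div_mult_mod_eq)
  then have "real D + \<theta> = 2 ^ R * t / 2 ^ p"
    unfolding \<theta>_def by (simp add: field_simps)
  moreover have "(2::real) ^ R = 2 ^ Suc i * 2 ^ p"
    using i power_add[of "2::real" "Suc i" p] by (simp add: p_def)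
  ultimately have "2 ^ Suc i * pi * t = pi * (real D + \<theta>)"
    by simp
  then have "rademacher (Suc i) t = (-1) ^ D"
    unfolding rademacher_def using sgn_sin_pi_nat_plus[OF \<theta>, of D] by (simp only:)
  moreover have "even D \<longleftrightarrow> i \<notin> digit_set R x"
    using i by (simp add: D_def digit_set_def p_def bit_nat_def)
  ultimately show ?thesis
    by (simp add: x_def minus_one_power_iff)
qed

lemma walsh_eq_dyadic_char:
  assumes n: "n < 2 ^ R" and t: "0 \<le> t" "2 ^ R * t \<notin> \<int>"
  shows "walsh n t = dyadic_char (bits_of n) (digit_set R (dyadic_index R t))"
proof -
  let ?B = "bits_of n \<inter> digit_set R (dyadic_index R t)"
  have bits: "bits_of n \<subseteq> {..<n}" "bits_of n \<subseteq> {..<R}"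
    using n bits_of_subset_lessThan_iff less_exp by blast+
  have "walsh n t = (\<Prod>i<n. if i \<in> ?B then -1 else 1)"
    unfolding walsh_def
    by (rule prod.cong) (use bits t in \<open>auto simp: bits_of_def rademacher_Suc_eq_digit\<close>)
  also have "\<dots> = (-1) ^ card ({..<n} \<inter> ?B)"
    by (simp add: prod.If_cases Int_def)
  also have "{..<n} \<inter> ?B = ?B"
    using bits by blast
  finally show ?thesis
    by (simp add: dyadic_char_def)
qed

lemma digit_set_bij: "bij_betw (digit_set R) {..<2 ^ R} (Pow {..<R})"
proof -
  have inj: "inj_on (digit_set R) {..<2 ^ R}"
  proof (rule inj_onI)
    fix x y
    assume "x \<in> {..<2 ^ R}" "y \<in> {..<2 ^ R}" and eq: "digit_set R x = digit_set R y"
    then have high: "bits_of x \<subseteq> {..<R}" "bits_of y \<subseteq> {..<R}"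
      by (simp_all add: bits_of_subset_lessThan_iff)
    have "bit x p = bit y p" for p
    proof (cases "p < R")
      case True
      then have "R - 1 - p \<in> digit_set R x \<longleftrightarrow> R - 1 - p \<in> digit_set R y"
        using eq by simp
      then show ?thesis
        using True by (simp add: digit_set_def)
    next
      case False
      then show ?thesis
        using high by (auto simp: bits_of_def)
    qed
    then show "x = y"
      by (rule bit_eqI)
  qed
  have "digit_set R ` {..<2 ^ R} \<subseteq> Pow {..<R}"
    by (auto simp: digit_set_def)
  moreover have "card (digit_set R ` {..<2 ^ R}) = card (Pow {..<R})"
    using inj by (simp add: card_image card_Pow)
  ultimately have "digit_set R ` {..<2 ^ R} = Pow {..<R}"
    by (intro card_subset_eq) auto
  with inj show ?thesis
    by (simp add: bij_betw_def)
qed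

section \<open>Distribution of functions of the binary digits\<close>

lemma countable_null_sets_I01:
  assumes "countable N" "N \<subseteq> {0..1}"
  shows "N \<in> null_sets I01"
proof -
  have "N \<in> null_sets lebesgue"
    using assms(1) by (intro null_sets_completionI countable_imp_null_set_lborel)
  then show ?thesis
    using assms by (simp add: null_sets_restrict_space)
qed

lemma AE_not_dyadic_rational: "AE t in I01. 2 ^ R * t \<notin> \<int>"
proof (rule AE_I')
  let ?N = "{t\<in>{0..1::real}. 2 ^ R * t \<in> \<int>}"
  have "?N \<subseteq> (\<lambda>z. of_int z / 2 ^ R) ` UNIV"
  proof
    fix t
    assume "t \<in> ?N"
    then obtain z where "2 ^ R * t = of_int z"
      by (auto elim: Ints_cases)
    then have "t = of_int z / 2 ^ R"
      by (simp add: field_simps)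
    then show "t \<in> (\<lambda>z. of_int z / 2 ^ R) ` UNIV"
      by blast
  qed
  then have "countable ?N"
    by (rule countable_subset) simp
  then show "?N \<in> null_sets I01"
    by (rule countable_null_sets_I01) auto
  show "{t \<in> space I01. \<not> 2 ^ R * t \<notin> \<int>} \<subseteq> ?N"
    by auto
qed

lemma dyadic_index_eq_iff:
  assumes "0 \<le> t"
  shows "dyadic_index R t = x \<longleftrightarrow> t \<in> {real x / 2 ^ R ..< (real x + 1) / 2 ^ R}"
proof -
  have "dyadic_index R t = x \<longleftrightarrow> \<lfloor>2 ^ R * t\<rfloor> = int x"
    using assms by (auto simp: dyadic_index_def)
  also have "\<dots> \<longleftrightarrow> real x \<le> 2 ^ R * t \<and> 2 ^ R * t < real x + 1"
    by (simp add: floor_eq_iff)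
  also have "\<dots> \<longleftrightarrow> t \<in> {real x / 2 ^ R ..< (real x + 1) / 2 ^ R}"
    by (simp add: field_simps)
  finally show ?thesis .
qed

lemma dyadic_index_less:
  assumes "0 \<le> t" "t < 1"
  shows "dyadic_index R t < 2 ^ R"
proof -
  have "\<lfloor>2 ^ R * t\<rfloor> < 2 ^ R"
    using assms by (simp add: floor_less_iff)
  then show ?thesis
    unfolding dyadic_index_def using assms by (subst nat_less_iff) auto
qed

lemma dyadic_interval_bounds:
  assumes "x < 2 ^ R"
  shows "0 \<le> real x / 2 ^ R" "real x / 2 ^ R \<le> (real x + 1) / 2 ^ R" "(real x + 1) / 2 ^ R \<le> 1"
proof -
  have "real (x + 1) \<le> 2 ^ R"
    using assms by (metis Suc_eq_plus1 Suc_leI of_nat_le_iff of_nat_numeral of_nat_power)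
  then show "0 \<le> real x / 2 ^ R" "real x / 2 ^ R \<le> (real x + 1) / 2 ^ R" "(real x + 1) / 2 ^ R \<le> 1"
    by (simp_all add: divide_right_mono)
qed

lemma measure_I01_atLeastLessThan:
  assumes "0 \<le> a" "b \<le> 1" "a \<le> b"
  shows "{a..<b} \<in> sets I01" "measure I01 {a..<b} = b - a"
proof -
  show "{a..<b} \<in> sets I01"
    using assms by (auto simp: sets_restrict_space_iff)
  have "measure I01 {a..<b} = measure lebesgue {a..<b}"
    using assms by (intro measure_restrict_space) auto
  also have "\<dots> = measure lborel {a..<b}"
    by (intro measure_completion) simp
  finally show "measure I01 {a..<b} = b - a"
    using assms by simp
qed

lemma dyadic_index_preimage_eq:
  "{t\<in>{0..1}. P (dyadic_index R t)}
   = (\<Union>x\<in>{x\<in>{..<2 ^ R}. P x}. {real x / 2 ^ R ..< (real x + 1) / 2 ^ R})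
     \<union> ({t\<in>{0..1}. P (dyadic_index R t)} \<inter> {1})"
  (is "?A = (\<Union>x\<in>?S. ?I x) \<union> _")
proof (intro equalityI subsetI)
  fix t
  assume t: "t \<in> ?A"
  show "t \<in> (\<Union>x\<in>?S. ?I x) \<union> (?A \<inter> {1})"
  proof (cases "t = 1")
    case False
    then have "dyadic_index R t \<in> ?S" "t \<in> ?I (dyadic_index R t)"
      using t dyadic_index_less[of t R] dyadic_index_eq_iff[of t R] by auto
    then show ?thesis
      by blast
  qed (use t in simp)
next
  fix t
  assume "t \<in> (\<Union>x\<in>?S. ?I x) \<union> (?A \<inter> {1})"
  then show "t \<in> ?A"
  proof
    assume "t \<in> (\<Union>x\<in>?S. ?I x)"
    then obtain x where x: "x < 2 ^ R" "P x" "t \<in> ?I x"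
      by blast
    then have "real x / 2 ^ R \<le> t" "t < (real x + 1) / 2 ^ R"
      by simp_all
    then have "0 \<le> t" "t \<le> 1"
      using dyadic_interval_bounds[OF x(1)] by linarith+
    moreover from this x(3) have "dyadic_index R t = x"
      using dyadic_index_eq_iff[of t R x] by simp
    ultimately show ?thesis
      using x(2) by simp
  qed auto
qed

lemma measure_dyadic_index_preimage:
  "{t\<in>{0..1}. P (dyadic_index R t)} \<in> sets I01"
  "measure I01 {t\<in>{0..1}. P (dyadic_index R t)} = card {x\<in>{..<2 ^ R}. P x} / 2 ^ R"
proof -
  let ?A = "{t\<in>{0..1}. P (dyadic_index R t)}"
  define S where "S = {x\<in>{..<2 ^ R}. P x}"
  define I where "I x = {real x / 2 ^ R ..< (real x + 1) / 2 ^ R}" for x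
  have A: "?A = (\<Union>x\<in>S. I x) \<union> (?A \<inter> {1})"
    unfolding S_def I_def by (rule dyadic_index_preimage_eq)
  have I: "I x \<in> sets I01" "measure I01 (I x) = 1 / 2 ^ R" if "x \<in> S" for x
  proof -
    have "x < 2 ^ R"
      using that by (simp add: S_def)
    note bounds = dyadic_interval_bounds[OF this]
    show "I x \<in> sets I01" "measure I01 (I x) = 1 / 2 ^ R"
      using measure_I01_atLeastLessThan[OF bounds(1,3,2)] by (simp_all add: I_def field_simps)
  qed
  have null: "?A \<inter> {1} \<in> null_sets I01"
    by (rule countable_null_sets_I01) auto
  have union: "(\<Union>x\<in>S. I x) \<in> sets I01"
    using I by (intro sets.finite_UN) (auto simp: S_def)
  then show "?A \<in> sets I01"
    using null by (subst A) auto
  have "finite_measure I01"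
    by (rule finite_measure_lebesgue_on) (metis cbox_interval lmeasurable_cbox)
  then have "measure I01 (\<Union>x\<in>S. I x) = (\<Sum>x\<in>S. measure I01 (I x))"
  proof (rule finite_measure.finite_measure_finite_Union)
    show "finite S" "I ` S \<subseteq> sets I01"
      using I by (auto simp: S_def)
    have nonneg: "0 \<le> t" if "t \<in> I x" for t x
    proof -
      have "0 \<le> real x / 2 ^ R"
        by simp
      with that show ?thesis
        unfolding I_def by (meson atLeastLessThan_iff order.trans)
    qed
    have "I x \<inter> I y = {}" if "x \<noteq> y" for x y
    proof (rule ccontr)
      assume "I x \<inter> I y \<noteq> {}"
      then obtain t where t: "t \<in> I x" "t \<in> I y"
        by blast
      then have "dyadic_index R t = x" "dyadic_index R t = y"
        using dyadic_index_eq_iff[OF nonneg[OF t(1)], of R] by (simp_all add: I_def)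
      with that show False
        by simp
    qed
    then show "disjoint_family_on I S"
      by (simp add: disjoint_family_on_def)
  qed
  then show "measure I01 ?A = card S / 2 ^ R"
    using I union null by (subst A) (simp add: measure_Un_null_set)
qed

lemma card_digit_set_preimage:
  "card {x\<in>{..<2 ^ R}. Q (digit_set R x)} = card {S\<in>Pow {..<R}. Q S}"
  by (rule bij_betw_same_card, rule bij_betw_Collect[OF digit_set_bij]) simp

lemma measure_gt_digit_function:
  fixes g :: "real \<Rightarrow> real" and F :: "nat set \<Rightarrow> real"
  assumes g: "g \<in> borel_measurable I01"
    and AE: "AE t in I01. g t = F (digit_set R (dyadic_index R t))"
  shows "measure I01 {t\<in>{0..1}. \<bar>g t\<bar> > s} = card {S\<in>Pow {..<R}. \<bar>F S\<bar> > s} / 2 ^ R"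
proof -
  let ?P = "\<lambda>x. \<bar>F (digit_set R x)\<bar> > s"
  have "{t \<in> space I01. \<bar>g t\<bar> > s} \<in> sets I01"
    using borel_measurable_abs[OF g] by (simp add: borel_measurable_iff_greater)
  moreover have "AE t in I01. t \<in> {t\<in>{0..1}. \<bar>g t\<bar> > s} \<longleftrightarrow> t \<in> {t\<in>{0..1}. ?P (dyadic_index R t)}"
    using AE by eventually_elim simp
  ultimately have "measure I01 {t\<in>{0..1}. \<bar>g t\<bar> > s} = measure I01 {t\<in>{0..1}. ?P (dyadic_index R t)}"
    using measure_dyadic_index_preimage(1) by (intro measure_eq_AE) auto
  also have "\<dots> = card {x\<in>{..<2 ^ R}. ?P x} / 2 ^ R"
    by (rule measure_dyadic_index_preimage(2))
  finally show ?thesis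
    by (simp only: card_digit_set_preimage[where Q = "\<lambda>S. \<bar>F S\<bar> > s"])
qed

section \<open>Dyadic translates of Walsh sums\<close>

definition walsh_sum :: "(nat \<Rightarrow> real) \<Rightarrow> (nat \<Rightarrow> nat) \<Rightarrow> nat set \<Rightarrow> real \<Rightarrow> real" where
  "walsh_sum a \<nu> K t = (\<Sum>k\<in>K. a k * walsh (\<nu> k) t)"

lemma walsh_borel_measurable [measurable]: "walsh n \<in> borel_measurable borel"
  unfolding walsh_def rademacher_def by measurable

lemma walsh_sum_measurable: "walsh_sum a \<nu> K \<in> borel_measurable I01"
proof -
  have "walsh_sum a \<nu> K \<in> borel_measurable borel"
    unfolding walsh_sum_def[abs_def] by measurable
  then show ?thesis
    by (intro measurable_restrict_space1 measurable_completion) simp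
qed

lemma abs_walsh_le_1: "\<bar>walsh n t\<bar> \<le> 1"
  unfolding walsh_def rademacher_def abs_prod by (rule prod_le_1) (auto simp: abs_sgn_eq)

lemma abs_walsh_sum_le: "\<bar>walsh_sum a \<nu> K t\<bar> \<le> (\<Sum>k\<in>K. \<bar>a k\<bar>)"
  unfolding walsh_sum_def
  by (rule order.trans[OF sum_abs sum_mono]) (simp add: abs_mult mult_left_le abs_walsh_le_1)

lemma AE_walsh_sum_eq_dyadic_char:
  assumes "\<forall>k\<in>K. \<nu> k < 2 ^ R"
  shows "AE t in I01. walsh_sum a \<nu> K t
           = (\<Sum>k\<in>K. a k * dyadic_char (bits_of (\<nu> k)) (digit_set R (dyadic_index R t)))"
proof -
  have "AE t in I01. 0 \<le> t"
    by (rule AE_I2) simp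
  with AE_not_dyadic_rational[of R] show ?thesis
    unfolding walsh_sum_def
    by eventually_elim (intro sum.cong refl, simp add: walsh_eq_dyadic_char assms)
qed

text \<open>Multiplying the coefficient of \<open>w\<^sub>n\<close> by \<open>dyadic_char (bits_of n) J\<close> is the dyadic
  translation \<open>t \<mapsto> t \<oplus> J\<close> of the sum.\<close>
lemma equimeasurable_walsh_sum_translate:
  assumes \<nu>: "\<forall>k\<in>K. \<nu> k < 2 ^ R" and J: "J \<subseteq> {..<R}"
  shows "equimeasurable (walsh_sum (\<lambda>k. a k * dyadic_char (bits_of (\<nu> k)) J) \<nu> K) (walsh_sum a \<nu> K)"
proof -
  define F where "F S = (\<Sum>k\<in>K. a k * dyadic_char (bits_of (\<nu> k)) S)" for S
  have "AE t in I01. walsh_sum (\<lambda>k. a k * dyadic_char (bits_of (\<nu> k)) J) \<nu> K t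
                      = F (sym_diff (digit_set R (dyadic_index R t)) J)"
    using AE_walsh_sum_eq_dyadic_char[OF \<nu>, where a = "\<lambda>k. a k * dyadic_char (bits_of (\<nu> k)) J"]
    by eventually_elim (simp add: F_def dyadic_char_sym_diff finite_bits_of mult_ac)
  then have translate: "measure I01 {t\<in>{0..1}. \<bar>walsh_sum (\<lambda>k. a k * dyadic_char (bits_of (\<nu> k)) J) \<nu> K t\<bar> > s}
                        = card {S\<in>Pow {..<R}. \<bar>F (sym_diff S J)\<bar> > s} / 2 ^ R" for s
    by (rule measure_gt_digit_function[OF walsh_sum_measurable, where F = "\<lambda>S. F (sym_diff S J)"])
  have original: "measure I01 {t\<in>{0..1}. \<bar>walsh_sum a \<nu> K t\<bar> > s}
                  = card {S\<in>Pow {..<R}. \<bar>F S\<bar> > s} / 2 ^ R" for s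
    using AE_walsh_sum_eq_dyadic_char[OF \<nu>, of a]
    by (intro measure_gt_digit_function[OF walsh_sum_measurable]) (simp add: F_def)
  show ?thesis
    unfolding equimeasurable_def
  proof
    fix s
    show "measure I01 {t\<in>{0..1}. \<bar>walsh_sum (\<lambda>k. a k * dyadic_char (bits_of (\<nu> k)) J) \<nu> K t\<bar> > s}
          = measure I01 {t\<in>{0..1}. \<bar>walsh_sum a \<nu> K t\<bar> > s}"
      unfolding translate original card_Pow_sym_diff_invariant[OF J, of "\<lambda>S. \<bar>F S\<bar> > s"] ..
  qed
qed

section \<open>Walsh multipliers in rearrangement invariant spaces\<close>

lemma banach_function_space_zero:
  assumes "banach_function_space X nrm"
  shows "(\<lambda>_. 0) \<in> X" "nrm (\<lambda>_. 0) = 0"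
  using assms unfolding banach_function_space_def by auto

lemma banach_function_space_nonneg:
  assumes "banach_function_space X nrm" "f \<in> X"
  shows "0 \<le> nrm f"
  using assms unfolding banach_function_space_def by blast

lemma banach_function_space_add:
  assumes "banach_function_space X nrm" "f \<in> X" "g \<in> X"
  shows "(\<lambda>x. f x + g x) \<in> X" "nrm (\<lambda>x. f x + g x) \<le> nrm f + nrm g"
  using assms unfolding banach_function_space_def by blast+

lemma banach_function_space_scale:
  assumes "banach_function_space X nrm" "f \<in> X"
  shows "(\<lambda>x. c * f x) \<in> X" "nrm (\<lambda>x. c * f x) = \<bar>c\<bar> * nrm f"
  using assms unfolding banach_function_space_def by blast+

lemma banach_function_space_sum:
  assumes B: "banach_function_space X nrm" and "finite I" "\<And>i. i \<in> I \<Longrightarrow> f i \<in> X"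
  shows "(\<lambda>x. \<Sum>i\<in>I. f i x) \<in> X \<and> nrm (\<lambda>x. \<Sum>i\<in>I. f i x) \<le> (\<Sum>i\<in>I. nrm (f i))"
  using assms(2,3)
proof (induction I rule: finite_induct)
  case empty
  then show ?case
    using banach_function_space_zero[OF B] by simp
next
  case (insert i I)
  then have "f i \<in> X" "(\<lambda>x. \<Sum>i\<in>I. f i x) \<in> X"
    by simp_all
  from banach_function_space_add[OF B this] insert show ?case
    by simp
qed

lemma banach_function_space_weighted_sum:
  assumes B: "banach_function_space X nrm" and "finite I"
    and f: "\<And>i. i \<in> I \<Longrightarrow> f i \<in> X" "\<And>i. i \<in> I \<Longrightarrow> nrm (f i) \<le> c"
  shows "(\<lambda>x. \<Sum>i\<in>I. w i * f i x) \<in> X \<and> nrm (\<lambda>x. \<Sum>i\<in>I. w i * f i x) \<le> (\<Sum>i\<in>I. \<bar>w i\<bar>) * c"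
proof -
  have "(\<lambda>x. \<Sum>i\<in>I. w i * f i x) \<in> X \<and>
        nrm (\<lambda>x. \<Sum>i\<in>I. w i * f i x) \<le> (\<Sum>i\<in>I. nrm (\<lambda>x. w i * f i x))"
    using banach_function_space_scale(1)[OF B f(1)] by (intro banach_function_space_sum[OF B \<open>finite I\<close>])
  moreover have "(\<Sum>i\<in>I. nrm (\<lambda>x. w i * f i x)) \<le> (\<Sum>i\<in>I. \<bar>w i\<bar> * c)"
    using banach_function_space_scale(2)[OF B f(1)] f(2) by (intro sum_mono) (simp add: mult_left_mono)
  ultimately show ?thesis
    by (simp add: sum_distrib_right)
qed

lemma rearrangement_invariant_equimeasurable:
  assumes "rearrangement_invariant X nrm" "f \<in> X"
    and "f \<in> borel_measurable I01" "g \<in> borel_measurable I01" "equimeasurable g f"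
  shows "g \<in> X" "nrm g = nrm f"
  using assms unfolding rearrangement_invariant_def by blast+

lemma walsh_sum_in_interpolation_space:
  assumes "interpolation_space_L1_Linf X nrm"
  shows "walsh_sum a \<nu> K \<in> X"
proof -
  have "ess_bdd (walsh_sum a \<nu> K) (\<Sum>k\<in>K. \<bar>a k\<bar>)"
    by (simp add: ess_bdd_def abs_walsh_sum_le)
  then show ?thesis
    using assms walsh_sum_measurable unfolding interpolation_space_L1_Linf_def by blast
qed

text \<open>Averaging the dyadic translates of a Walsh sum with weights \<open>w\<close> multiplies the coefficient
  of \<open>w\<^sub>n\<close> by the Fourier transform of \<open>w\<close> at \<open>n\<close>; in an r.i. space this costs at most
  the total variation of \<open>w\<close>.\<close>
lemma walsh_sum_multiplier:
  fixes w :: "nat set \<Rightarrow> real"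
  assumes RI: "rearrangement_invariant X nrm" and f: "walsh_sum a \<nu> K \<in> X"
    and \<nu>: "\<forall>k\<in>K. \<nu> k < 2 ^ R" and U: "U \<subseteq> {..<R}"
  defines "b \<equiv> \<lambda>k. a k * (\<Sum>J\<in>Pow U. w J * dyadic_char (bits_of (\<nu> k)) J)"
  shows "walsh_sum b \<nu> K \<in> X \<and> nrm (walsh_sum b \<nu> K) \<le> (\<Sum>J\<in>Pow U. \<bar>w J\<bar>) * nrm (walsh_sum a \<nu> K)"
proof -
  have B: "banach_function_space X nrm"
    using RI by (simp add: rearrangement_invariant_def)
  define g where "g J = walsh_sum (\<lambda>k. a k * dyadic_char (bits_of (\<nu> k)) J) \<nu> K" for J
  have "g J \<in> X" "nrm (g J) = nrm (walsh_sum a \<nu> K)" if "J \<in> Pow U" for J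
    using rearrangement_invariant_equimeasurable[OF RI f walsh_sum_measurable walsh_sum_measurable
        equimeasurable_walsh_sum_translate[OF \<nu>]] that U
    by (auto simp: g_def)
  then have "(\<lambda>t. \<Sum>J\<in>Pow U. w J * g J t) \<in> X \<and>
             nrm (\<lambda>t. \<Sum>J\<in>Pow U. w J * g J t) \<le> (\<Sum>J\<in>Pow U. \<bar>w J\<bar>) * nrm (walsh_sum a \<nu> K)"
    using finite_subset[OF U] by (intro banach_function_space_weighted_sum[OF B]) auto
  moreover have "(\<lambda>t. \<Sum>J\<in>Pow U. w J * g J t) = walsh_sum b \<nu> K"
    by (simp add: g_def b_def walsh_sum_def fun_eq_iff sum_distrib_left sum_distrib_right
        sum.swap[of _ "Pow U"] mult_ac)
  ultimately show ?thesis
    by simp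
qed

lemma walsh_sum_filter:
  assumes "finite K" "\<And>k. k \<in> K \<Longrightarrow> c k = of_bool (P k)"
  shows "walsh_sum (\<lambda>k. a k * c k) \<nu> K = walsh_sum a \<nu> {k\<in>K. P k}"
proof
  fix t
  have "walsh_sum a \<nu> {k\<in>K. P k} t = (\<Sum>k\<in>K. if P k then a k * walsh (\<nu> k) t else 0)"
    unfolding walsh_sum_def using assms(1) by (rule sum.inter_filter)
  also have "\<dots> = walsh_sum (\<lambda>k. a k * c k) \<nu> K t"
    unfolding walsh_sum_def by (rule sum.cong) (simp_all add: assms(2))
  finally show "walsh_sum (\<lambda>k. a k * c k) \<nu> K t = walsh_sum a \<nu> {k\<in>K. P k} t"
    by simp
qed

lemma finite_imp_less_exp_bound:
  fixes \<nu> :: "'a \<Rightarrow> nat"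
  assumes "finite K"
  obtains R :: nat where "m \<le> R" "\<forall>k\<in>K. \<nu> k < 2 ^ R"
proof
  show "m \<le> m + (\<Sum>k\<in>K. \<nu> k)"
    by simp
  have "\<nu> k < 2 ^ (m + (\<Sum>k\<in>K. \<nu> k))" if "k \<in> K" for k
  proof -
    have "\<nu> k \<le> (\<Sum>k\<in>K. \<nu> k)"
      using assms that by (intro member_le_sum) auto
    also have "\<dots> < 2 ^ (\<Sum>k\<in>K. \<nu> k)"
      by (rule less_exp)
    also have "\<dots> \<le> 2 ^ (m + (\<Sum>k\<in>K. \<nu> k))"
      by (simp add: power_increasing)
    finally show ?thesis .
  qed
  then show "\<forall>k\<in>K. \<nu> k < 2 ^ (m + (\<Sum>k\<in>K. \<nu> k))"
    by blast
qed

lemma walsh_sum_dyadic_partial_le: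
  assumes RI: "rearrangement_invariant X nrm" and f: "walsh_sum a \<nu> K \<in> X" and K: "finite K"
  shows "walsh_sum a \<nu> {k\<in>K. \<nu> k < 2 ^ m} \<in> X"
    "nrm (walsh_sum a \<nu> {k\<in>K. \<nu> k < 2 ^ m}) \<le> nrm (walsh_sum a \<nu> K)"
proof -
  obtain R where "m \<le> R" and \<nu>: "\<forall>k\<in>K. \<nu> k < 2 ^ R"
    using finite_imp_less_exp_bound[OF K] .
  define U where "U = {m..<R}"
  define w :: "nat set \<Rightarrow> real" where "w J = 1 / 2 ^ card U" for J
  have "(\<Sum>J\<in>Pow U. w J * dyadic_char (bits_of (\<nu> k)) J) = of_bool (\<nu> k < 2 ^ m)" if "k \<in> K" for k
  proof -
    have "bits_of (\<nu> k) \<subseteq> {..<R}"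
      using \<nu> that by (simp add: bits_of_subset_lessThan_iff)
    then have "bits_of (\<nu> k) \<inter> U = {} \<longleftrightarrow> bits_of (\<nu> k) \<subseteq> {..<m}"
      unfolding U_def by fastforce
    then have "bits_of (\<nu> k) \<inter> U = {} \<longleftrightarrow> \<nu> k < 2 ^ m"
      by (simp add: bits_of_subset_lessThan_iff)
    moreover have "(\<Sum>J\<in>Pow U. w J * dyadic_char (bits_of (\<nu> k)) J)
                   = (\<Sum>J\<in>Pow U. dyadic_char (bits_of (\<nu> k)) J) / 2 ^ card U"
      by (simp add: w_def sum_divide_distrib)
    ultimately show ?thesis
      by (simp add: U_def sum_dyadic_char_Pow)
  qed
  then have "walsh_sum (\<lambda>k. a k * (\<Sum>J\<in>Pow U. w J * dyadic_char (bits_of (\<nu> k)) J)) \<nu> K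
             = walsh_sum a \<nu> {k\<in>K. \<nu> k < 2 ^ m}"
    by (rule walsh_sum_filter[OF K])
  moreover have "(\<Sum>J\<in>Pow U. \<bar>w J\<bar>) = 1"
    by (simp add: w_def U_def card_Pow)
  ultimately show "walsh_sum a \<nu> {k\<in>K. \<nu> k < 2 ^ m} \<in> X"
    "nrm (walsh_sum a \<nu> {k\<in>K. \<nu> k < 2 ^ m}) \<le> nrm (walsh_sum a \<nu> K)"
    using walsh_sum_multiplier[OF RI f \<nu>, of U w] by (simp_all add: U_def subset_eq)
qed

lemma walsh_sum_term_le:
  assumes RI: "rearrangement_invariant X nrm" and f: "walsh_sum a \<nu> K \<in> X" and K: "finite K"
    and inj: "inj_on \<nu> K" and k\<^sub>0: "k\<^sub>0 \<in> K"
  shows "(\<lambda>t. a k\<^sub>0 * walsh (\<nu> k\<^sub>0) t) \<in> X" "nrm (\<lambda>t. a k\<^sub>0 * walsh (\<nu> k\<^sub>0) t) \<le> nrm (walsh_sum a \<nu> K)"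
proof -
  obtain R where \<nu>: "\<forall>k\<in>K. \<nu> k < 2 ^ R"
    using finite_imp_less_exp_bound[OF K] .
  define w :: "nat set \<Rightarrow> real" where "w J = dyadic_char (bits_of (\<nu> k\<^sub>0)) J / 2 ^ R" for J
  have "(\<Sum>J\<in>Pow {..<R}. w J * dyadic_char (bits_of (\<nu> k)) J) = of_bool (k = k\<^sub>0)" if k: "k \<in> K" for k
  proof -
    have "bits_of (\<nu> k\<^sub>0) \<subseteq> {..<R}" "bits_of (\<nu> k) \<subseteq> {..<R}"
      using \<nu> k k\<^sub>0 by (simp_all add: bits_of_subset_lessThan_iff)
    then have "(\<Sum>J\<in>Pow {..<R}. w J * dyadic_char (bits_of (\<nu> k)) J)
               = of_bool (bits_of (\<nu> k\<^sub>0) = bits_of (\<nu> k))"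
      by (simp add: w_def dyadic_char_orthogonal flip: sum_divide_distrib)
    moreover have "bits_of (\<nu> k\<^sub>0) = bits_of (\<nu> k) \<longleftrightarrow> k = k\<^sub>0"
      using inj k k\<^sub>0 by (auto simp: bits_of_inject inj_on_def)
    ultimately show ?thesis
      by simp
  qed
  then have "walsh_sum (\<lambda>k. a k * (\<Sum>J\<in>Pow {..<R}. w J * dyadic_char (bits_of (\<nu> k)) J)) \<nu> K
             = walsh_sum a \<nu> {k\<in>K. k = k\<^sub>0}"
    by (rule walsh_sum_filter[OF K])
  also have "\<dots> = (\<lambda>t. a k\<^sub>0 * walsh (\<nu> k\<^sub>0) t)"
  proof -
    have "{k\<in>K. k = k\<^sub>0} = {k\<^sub>0}"
      using k\<^sub>0 by blast
    then show ?thesis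
      by (simp add: walsh_sum_def[abs_def])
  qed
  moreover have "(\<Sum>J\<in>Pow {..<R}. \<bar>w J\<bar>) = 1"
    by (simp add: w_def dyadic_char_def card_Pow abs_mult power_abs)
  ultimately show "(\<lambda>t. a k\<^sub>0 * walsh (\<nu> k\<^sub>0) t) \<in> X"
    "nrm (\<lambda>t. a k\<^sub>0 * walsh (\<nu> k\<^sub>0) t) \<le> nrm (walsh_sum a \<nu> K)"
    using walsh_sum_multiplier[OF RI f \<nu>, of "{..<R}" w] by simp_all
qed

lemma walsh_sum_subset_le:
  assumes RI: "rearrangement_invariant X nrm" and f: "walsh_sum a \<nu> K \<in> X" and K: "finite K"
    and inj: "inj_on \<nu> K" and K': "K' \<subseteq> {k\<in>K. \<nu> k < 2 ^ m}"
  shows "nrm (walsh_sum a \<nu> K') \<le> (1 + real (card ({k\<in>K. \<nu> k < 2 ^ m} - K'))) * nrm (walsh_sum a \<nu> K)"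
proof -
  have B: "banach_function_space X nrm"
    using RI by (simp add: rearrangement_invariant_def)
  let ?A = "{k\<in>K. \<nu> k < 2 ^ m}"
  let ?D = "?A - K'"
  have A: "walsh_sum a \<nu> ?A \<in> X" "nrm (walsh_sum a \<nu> ?A) \<le> nrm (walsh_sum a \<nu> K)"
    using walsh_sum_dyadic_partial_le[OF RI f K] by blast+
  have single: "(\<lambda>t. a k * walsh (\<nu> k) t) \<in> X" "nrm (\<lambda>t. a k * walsh (\<nu> k) t) \<le> nrm (walsh_sum a \<nu> K)"
    if "k \<in> ?D" for k
    using walsh_sum_term_le[OF RI f K inj, of k] that by auto
  have "(\<lambda>t. \<Sum>k\<in>?D. a k * walsh (\<nu> k) t) \<in> X \<and>
        nrm (\<lambda>t. \<Sum>k\<in>?D. a k * walsh (\<nu> k) t) \<le> (\<Sum>k\<in>?D. nrm (\<lambda>t. a k * walsh (\<nu> k) t))"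
    by (rule banach_function_space_sum[OF B, where f = "\<lambda>k t. a k * walsh (\<nu> k) t"])
      (use K single(1) in auto)
  moreover have "(\<Sum>k\<in>?D. nrm (\<lambda>t. a k * walsh (\<nu> k) t)) \<le> card ?D * nrm (walsh_sum a \<nu> K)"
    using single(2) by (rule sum_bounded_above)
  ultimately have D: "walsh_sum a \<nu> ?D \<in> X" "nrm (walsh_sum a \<nu> ?D) \<le> card ?D * nrm (walsh_sum a \<nu> K)"
    unfolding walsh_sum_def[abs_def] by auto
  have "walsh_sum a \<nu> ?A t = walsh_sum a \<nu> ?D t + walsh_sum a \<nu> K' t" for t
    unfolding walsh_sum_def using K K' by (intro sum.subset_diff) auto
  then have split: "walsh_sum a \<nu> K' = (\<lambda>t. walsh_sum a \<nu> ?A t + (-1) * walsh_sum a \<nu> ?D t)"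
    by (simp add: fun_eq_iff)
  have "nrm (walsh_sum a \<nu> K') \<le> nrm (walsh_sum a \<nu> ?A) + nrm (\<lambda>t. (-1) * walsh_sum a \<nu> ?D t)"
    unfolding split by (rule banach_function_space_add(2)[OF B A(1) banach_function_space_scale(1)[OF B D(1)]])
  also have "\<dots> = nrm (walsh_sum a \<nu> ?A) + nrm (walsh_sum a \<nu> ?D)"
    using banach_function_space_scale(2)[OF B D(1), of "-1"] by simp
  also have "\<dots> \<le> (1 + real (card ?D)) * nrm (walsh_sum a \<nu> K)"
    using A(2) D(2) by (simp add: algebra_simps)
  finally show ?thesis .
qed

section \<open>Lacunary sequences\<close>

lemma lacunary_pos:
  assumes "lacunary q n" "0 < q" "1 \<le> k"
  shows "0 < n k"
proof (rule ccontr)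
  assume "\<not> 0 < n k"
  then have "real (n (Suc k)) / real (n k) = 0"
    by simp
  then show False
    using assms by (auto simp: lacunary_def)
qed

lemma lacunary_step:
  assumes "lacunary q n" "0 < q" "1 \<le> k"
  shows "q * real (n k) \<le> real (n (Suc k))"
proof -
  have "q \<le> real (n (Suc k)) / real (n k)"
    using assms by (simp add: lacunary_def)
  then show ?thesis
    using lacunary_pos[OF assms] by (simp add: le_divide_eq)
qed

lemma lacunary_geometric:
  assumes "lacunary q n" "0 < q" "1 \<le> k"
  shows "q ^ d * real (n k) \<le> real (n (k + d))"
proof (induction d)
  case 0
  then show ?case
    by simp
next
  case (Suc d)
  have "q ^ Suc d * real (n k) \<le> q * real (n (k + d))"
    using Suc.IH assms(2) by (simp add: mult.assoc)
  also have "\<dots> \<le> real (n (k + Suc d))"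
    using lacunary_step[OF assms(1,2), of "k + d"] assms(3) by simp
  finally show ?case .
qed

lemma lacunary_strict_mono_on:
  assumes "lacunary q n" "1 < q"
  shows "strict_mono_on {1..} n"
proof (rule strict_mono_onI)
  fix j k :: nat
  assume "j \<in> {1..}" "k \<in> {1..}" "j < k"
  then have "real (n j) < q ^ (k - j) * real (n j)"
    using assms lacunary_pos[OF assms(1), of j] by simp
  also have "\<dots> \<le> real (n k)"
    using lacunary_geometric[OF assms(1), of j "k - j"] assms(2) \<open>j \<in> {1..}\<close> \<open>j < k\<close> by simp
  finally show "n j < n k"
    by simp
qed

lemma lacunary_dyadic_block:
  assumes lac: "lacunary q n" "1 < q" and L: "2 \<le> q ^ L" and M: "1 \<le> M"
  obtains m where "\<forall>k\<in>{1..M}. n k < 2 ^ m" "\<forall>k. M < k \<and> n k < 2 ^ m \<longrightarrow> k < M + L"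
proof
  define m where "m = Suc (floor_log (n M))"
  have pos: "0 < n M"
    using lacunary_pos[OF lac(1) _ M] lac(2) by simp
  have below: "n M < 2 ^ m"
    using floor_log_exp2_gt[of "n M"] by (simp add: m_def)
  have above: "2 ^ m \<le> 2 * n M"
    using floor_log_exp2_le[OF pos] by (simp add: m_def)
  show "\<forall>k\<in>{1..M}. n k < 2 ^ m"
  proof
    fix k
    assume "k \<in> {1..M}"
    then have "n k \<le> n M"
      using strict_mono_on_leD[OF lacunary_strict_mono_on[OF lac]] M by auto
    with below show "n k < 2 ^ m"
      by simp
  qed
  show "\<forall>k. M < k \<and> n k < 2 ^ m \<longrightarrow> k < M + L"
  proof (intro allI impI)
    fix k
    assume k: "M < k \<and> n k < 2 ^ m"
    show "k < M + L"
    proof (rule ccontr)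
      assume "\<not> k < M + L"
      then have "L \<le> k - M"
        by simp
      then have "2 * real (n M) \<le> q ^ (k - M) * real (n M)"
        using L lac(2) order.trans[OF L power_increasing[of L "k - M" q]] by (simp add: mult_right_mono)
      also have "\<dots> \<le> real (n k)"
        using lacunary_geometric[OF lac(1) _ M, of "k - M"] lac(2) k by simp
      finally have "2 * n M \<le> n k"
        by linarith
      with above k show False
        by simp
    qed
  qed
qed

lemma lacunary_walsh_partial_sum_le:
  assumes RI: "rearrangement_invariant X nrm" and f: "walsh_sum a n {1..N} \<in> X"
    and lac: "lacunary q n" "1 < q" and L: "2 \<le> q ^ L" and M: "1 \<le> M" "M \<le> N"
  shows "nrm (walsh_sum a n {1..M}) \<le> real L * nrm (walsh_sum a n {1..N})"
proof -
  obtain m where low: "\<forall>k\<in>{1..M}. n k < 2 ^ m" and high: "\<forall>k. M < k \<and> n k < 2 ^ m \<longrightarrow> k < M + L"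
    using lacunary_dyadic_block[OF lac L M(1)] .
  let ?A = "{k\<in>{1..N}. n k < 2 ^ m}"
  have inj: "inj_on n {1..N}"
    using strict_mono_on_imp_inj_on[OF lacunary_strict_mono_on[OF lac]] by (rule inj_on_subset) auto
  have "?A - {1..M} \<subseteq> {M<..<M + L}"
    using high by auto
  then have "card (?A - {1..M}) \<le> L - 1"
    using card_mono[of "{M<..<M + L}" "?A - {1..M}"] by simp
  moreover have "1 \<le> L"
    using L by (cases L) auto
  ultimately have card_bound: "1 + real (card (?A - {1..M})) \<le> real L"
    by linarith
  have B: "banach_function_space X nrm"
    using RI by (simp add: rearrangement_invariant_def)
  have "{1..M} \<subseteq> ?A"
    using low M by auto
  then have "nrm (walsh_sum a n {1..M}) \<le> (1 + real (card (?A - {1..M}))) * nrm (walsh_sum a n {1..N})"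
    by (rule walsh_sum_subset_le[OF RI f finite_atLeastAtMost inj])
  also have "\<dots> \<le> real L * nrm (walsh_sum a n {1..N})"
    using card_bound banach_function_space_nonneg[OF B f] by (rule mult_right_mono)
  finally show ?thesis .
qed

theorem proposition4p2:
  fixes X :: "(real \<Rightarrow> real) set" and nrm :: "(real \<Rightarrow> real) \<Rightarrow> real"
    and q :: real and n :: "nat \<Rightarrow> nat"
  assumes "rearrangement_invariant X nrm"
    and "interpolation_space_L1_Linf X nrm"
    and "q > 1" and "lacunary q n"
  shows "\<exists>K>0. \<forall>M N (a :: nat \<Rightarrow> real). M < N \<longrightarrow>
           nrm (\<lambda>t. \<Sum>k=1..M. a k * walsh (n k) t)
             \<le> K * nrm (\<lambda>t. \<Sum>k=1..N. a k * walsh (n k) t)"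
proof -
  have B: "banach_function_space X nrm"
    using assms(1) by (simp add: rearrangement_invariant_def)
  obtain L where L: "2 < q ^ L"
    using real_arch_pow[OF assms(3)] by blast
  then have "0 < L"
    by (cases L) auto
  have fX: "walsh_sum a n K \<in> X" for a K
    using assms(2) by (rule walsh_sum_in_interpolation_space)
  have bound: "nrm (walsh_sum a n {1..M}) \<le> real L * nrm (walsh_sum a n {1..N})" if "M < N" for M N a
  proof (cases "M = 0")
    case True
    then have "walsh_sum a n {1..M} = (\<lambda>_. 0)"
      by (simp add: walsh_sum_def[abs_def])
    then show ?thesis
      using banach_function_space_zero(2)[OF B] banach_function_space_nonneg[OF B fX] by simp
  next
    case False
    with L that have "2 \<le> q ^ L" "1 \<le> M" "M \<le> N"
      by simp_all
    then show ?thesis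
      by (rule lacunary_walsh_partial_sum_le[OF assms(1) fX assms(4,3)])
  qed
  show ?thesis
    using \<open>0 < L\<close> bound unfolding walsh_sum_def[abs_def] by (intro exI[of _ "real L"]) simp
qed

end
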